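(* Let $n\ge1$ and $0\le j\le n-1$. For every graph $G^*$ on $n$ vertices with at most one loop per vertex, \[\lambda_1(G^* )-\lambda_{n-j}(G^* )\le \frac n2\left(1+\sqrt{\frac{j+2}{j+1}}\right).\] Consequently, $s_{0,j}\le \frac12\left(1+\sqrt{\frac{j+2}{j+1}}\right)$.
   Context: A graph with at most one loop per vertex on vertex set $\{1,\dots,n\}$ is identified with its adjacency matrix $A=(a_{uv})$, a symmetric $n\times n$ $(0,1)$-matrix where $a_{uv}=1$ iff $uv$ is an edge and $a_{uu}=1$ iff there is a loop at $u$. Its eigenvalues (of $A$) are listed as $\lambda_1\ge\cdots\ge\lambda_n$. For a simple graph $G$ on $n$ vertices, ${\rm spread}_{i,j}(G)=\lambda_{i+1}(G)-\lambda_{n-j}(G)$; ${\rm spread}_{i,j}(n)$ is the maximum of ${\rm spread}_{i,j}(G)$ over all simple graphs $G$ on $n$ vertices, and $s_{i,j}=\lim_{n\to\infty}{\rm spread}_{i,j}(n)/n$ (this limit is known to exist). *)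

theory Defs
  imports "Jordan_Normal_Form.Char_Poly"
begin

text \<open>Adjacency matrix (0-indexed, vertices 0..n-1) of a graph with at most one loop per vertex:
  a symmetric n x n (0,1)-matrix.\<close>
definition loop_graph_adj :: "nat \<Rightarrow> real mat \<Rightarrow> bool" where
  "loop_graph_adj n A \<longleftrightarrow> A \<in> carrier_mat n n \<and>
     (\<forall>u<n. \<forall>v<n. (A $$ (u,v) = 0 \<or> A $$ (u,v) = 1) \<and> A $$ (u,v) = A $$ (v,u))"

definition simple_graph_adj :: "nat \<Rightarrow> real mat \<Rightarrow> bool" where
  "simple_graph_adj n A \<longleftrightarrow> loop_graph_adj n A \<and> (\<forall>u<n. A $$ (u,u) = 0)"

text \<open>Eigenvalues (roots of the characteristic polynomial, with multiplicity), in
  non-increasing order; eig A k is lambda_k (1-indexed).\<close>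
definition eigs :: "real mat \<Rightarrow> real list" where
  "eigs A = rev (sorted_list_of_multiset (proots (char_poly A)))"

definition eig :: "real mat \<Rightarrow> nat \<Rightarrow> real" where
  "eig A k = eigs A ! (k - 1)"

definition spread :: "nat \<Rightarrow> nat \<Rightarrow> nat \<Rightarrow> real" where
  "spread i j n = Max {eig A (i+1) - eig A (n-j) | A. simple_graph_adj n A}"

end

theory Submission
  imports Defs "Jordan_Normal_Form.Schur_Decomposition"
begin

text \<open>Let \<open>\<lambda>\<^sub>1 \<ge> \<dots> \<ge> \<lambda>\<^sub>n\<close> be the eigenvalues of \<open>A\<close>. As \<open>A\<close> is a symmetric 0/1 matrix,
  \<open>\<Sum> \<lambda>\<^sub>i\<^sup>2 = tr (A\<^sup>2)\<close> is the number \<open>e\<close> of ones in \<open>A\<close>, and the Rayleigh quotient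
  of the all-ones vector gives \<open>e \<le> n \<lambda>\<^sub>1\<close>. If \<open>\<mu> = \<lambda>_(n-j)\<close> is negative, each of the
  \<open>j + 1\<close> smallest eigenvalues has square at least \<open>\<mu>\<^sup>2\<close>, so
  \<open>\<lambda>\<^sub>1\<^sup>2 + (j + 1) \<mu>\<^sup>2 \<le> n \<lambda>\<^sub>1\<close>; maximizing \<open>\<lambda>\<^sub>1 - \<mu>\<close> over this ellipse gives
  the bound, and dividing by \<open>n\<close> bounds \<open>s_(0,j)\<close>.

  Only characteristic polynomials are used: eigenvalues of real symmetric matrices are
  real, traces of powers are power sums of eigenvalues by Schur triangularization, and
  the Rayleigh bound is derived from traces of powers rather than from eigenvectors.\<close>

section \<open>Real symmetric matrices have a real spectrum\<close>

lemma transpose_eq_self_iff: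
  assumes "A \<in> carrier_mat n n"
  shows "A\<^sup>T = A \<longleftrightarrow> (\<forall>i<n. \<forall>j<n. A $$ (i,j) = A $$ (j,i))"
proof
  assume "A\<^sup>T = A"
  then show "\<forall>i<n. \<forall>j<n. A $$ (i,j) = A $$ (j,i)"
    using assms by (metis carrier_matD index_transpose_mat(1))
qed (use assms in \<open>auto intro!: eq_matI\<close>)

lemma real_symmetric_eigenvalue_real:
  fixes A :: "real mat"
  assumes A: "A \<in> carrier_mat n n" and sym: "A\<^sup>T = A"
    and ev: "eigenvalue (map_mat complex_of_real A) a"
  shows "a \<in> \<real>"
proof -
  let ?C = "map_mat complex_of_real A"
  have sym_entry: "A $$ (i,j) = A $$ (j,i)" if "i < n" "j < n" for i j
    using sym A that transpose_eq_self_iff by blast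
  from ev obtain v where v: "v \<in> carrier_vec n" "v \<noteq> 0\<^sub>v n" "?C *\<^sub>v v = a \<cdot>\<^sub>v v"
    unfolding eigenvalue_def eigenvector_def using A by auto
  have row: "(\<Sum>j<n. of_real (A $$ (i,j)) * v $ j) = a * v $ i" if i: "i < n" for i
  proof -
    have "(?C *\<^sub>v v) $ i = (a \<cdot>\<^sub>v v) $ i" using v by simp
    thus ?thesis using i A v(1) by (auto simp: mult_mat_vec_def scalar_prod_def lessThan_atLeast0)
  qed
  \<comment> \<open>\<open>S = v\<^sup>* A v\<close> is both \<open>a |v|\<^sup>2\<close> and, by symmetry of \<open>A\<close>, its own conjugate.\<close>
  define N where "N = (\<Sum>i<n. v $ i * cnj (v $ i))"
  define S where "S = (\<Sum>i<n. \<Sum>j<n. of_real (A $$ (i,j)) * v $ j * cnj (v $ i))"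
  have S_eq: "S = a * N"
    unfolding S_def N_def sum_distrib_left
    by (rule sum.cong[OF refl], subst sum_distrib_right[symmetric], simp add: row mult.assoc)
  have "cnj S = (\<Sum>i<n. \<Sum>j<n. of_real (A $$ (i,j)) * cnj (v $ j) * v $ i)"
    unfolding S_def by (simp add: mult.commute)
  also have "\<dots> = (\<Sum>j<n. \<Sum>i<n. of_real (A $$ (i,j)) * cnj (v $ j) * v $ i)"
    by (rule sum.swap)
  also have "\<dots> = S" unfolding S_def
    by (rule sum.cong[OF refl], rule sum.cong[OF refl], simp add: sym_entry mult.commute)
  finally have S_real: "cnj S = S" .
  have N_real: "cnj N = N" unfolding N_def by (simp add: mult.commute)
  have "N = of_real (\<Sum>i<n. (cmod (v $ i))\<^sup>2)" unfolding N_def of_real_sum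
    by (rule sum.cong[OF refl], rule complex_norm_square[symmetric])
  moreover obtain i where "i < n" "v $ i \<noteq> 0" using v(1,2) by (metis eq_vecI index_zero_vec carrier_vecD)
  then have "(\<Sum>i<n. (cmod (v $ i))\<^sup>2) > 0" by (intro sum_pos2) auto
  ultimately have "N \<noteq> 0" by (metis of_real_eq_0_iff less_irrefl)
  from S_eq S_real N_real \<open>N \<noteq> 0\<close> have "cnj a = a" by (metis complex_cnj_mult mult_right_cancel)
  thus ?thesis by (metis Reals_cnj_iff)
qed

lemma char_poly_real_symmetric_splits:
  fixes A :: "real mat"
  assumes A: "A \<in> carrier_mat n n" and sym: "A\<^sup>T = A"
  obtains rs where "char_poly A = (\<Prod>r\<leftarrow>rs. [:-r, 1:])" and "length rs = n"
proof -
  let ?C = "map_mat complex_of_real A"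
  have C: "?C \<in> carrier_mat n n" using A by simp
  obtain as where as: "char_poly ?C = (\<Prod>a\<leftarrow>as. [:-a, 1:])" "length as = n"
    using char_poly_factorized[OF C] by blast
  have "a \<in> \<real>" if "a \<in> set as" for a
  proof (rule real_symmetric_eigenvalue_real[OF A sym])
    have "poly (char_poly ?C) a = 0"
      unfolding as(1) poly_prod_list prod_list_zero_iff using that by auto
    then show "eigenvalue ?C a" using eigenvalue_root_char_poly[OF C] by simp
  qed
  then have as_real: "as = map of_real (map Re as)"
    by (induct as) (auto simp: complex_is_Real_iff complex_eq_iff)
  interpret of_real_poly: map_poly_inj_comm_ring_hom complex_of_real ..
  have "map_poly of_real (char_poly A) = char_poly ?C"
    by (rule of_real_hom.char_poly_hom[OF A, symmetric])
  also have "\<dots> = map_poly of_real (\<Prod>r\<leftarrow>map Re as. [:-r, 1:])"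
    by (subst as(1), subst as_real) (simp add: of_real_poly.hom_prod_list o_def)
  finally have "char_poly A = (\<Prod>r\<leftarrow>map Re as. [:-r, 1:])" by simp
  then show thesis using that[of "map Re as"] as(2) by simp
qed

section \<open>Traces of powers via Schur triangularization\<close>

lemma upper_triangular_mult:
  fixes X Y :: "'a::semiring_0 mat"
  assumes X: "X \<in> carrier_mat n n" "upper_triangular X"
    and Y: "Y \<in> carrier_mat n n" "upper_triangular Y"
  shows "upper_triangular (X * Y)"
proof (rule upper_triangularI)
  fix i j assume "j < i" "i < dim_row (X * Y)"
  moreover have "X $$ (i,l) * Y $$ (l,j) = 0" if "j < i" "i < n" "l < n" for l
    using that X Y by (cases "l < i") (auto simp: upper_triangularD)
  ultimately show "(X * Y) $$ (i,j) = 0"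
    using X Y by (simp add: scalar_prod_def)
qed

lemma diag_entry_mult_upper_triangular:
  fixes X Y :: "'a::semiring_0 mat"
  assumes X: "X \<in> carrier_mat n n" "upper_triangular X"
    and Y: "Y \<in> carrier_mat n n" "upper_triangular Y" and i: "i < n"
  shows "(X * Y) $$ (i,i) = X $$ (i,i) * Y $$ (i,i)"
proof -
  have entry: "X $$ (i,l) * Y $$ (l,i) = (if l = i then X $$ (i,i) * Y $$ (i,i) else 0)"
    if l: "l < n" for l
  proof (cases rule: linorder_cases[of l i])
    case less
    then have "X $$ (i,l) = 0" using X i by (intro upper_triangularD[OF X(2)]) auto
    then show ?thesis using less by simp
  next
    case greater
    then have "Y $$ (l,i) = 0" using Y l by (intro upper_triangularD[OF Y(2)]) auto
    then show ?thesis using greater by simp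
  qed simp
  have "(X * Y) $$ (i,i) = (\<Sum>l<n. X $$ (i,l) * Y $$ (l,i))"
    using X Y i by (simp add: scalar_prod_def lessThan_atLeast0)
  also have "\<dots> = (\<Sum>l<n. if l = i then X $$ (i,i) * Y $$ (i,i) else 0)"
    by (rule sum.cong[OF refl], rule entry) simp
  also have "\<dots> = X $$ (i,i) * Y $$ (i,i)" using i by simp
  finally show ?thesis .
qed

lemma upper_triangular_pow:
  fixes T :: "'a::semiring_1 mat"
  assumes T: "T \<in> carrier_mat n n" "upper_triangular T"
  shows "upper_triangular (T ^\<^sub>m k)"
proof (induct k)
  case (Suc k)
  then show ?case using T by (simp add: upper_triangular_mult[of _ n])
qed simp

lemma diag_mat_pow_upper_triangular:
  fixes T :: "'a::semiring_1 mat"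
  assumes T: "T \<in> carrier_mat n n" "upper_triangular T"
  shows "diag_mat (T ^\<^sub>m k) = map (\<lambda>a. a ^ k) (diag_mat T)"
proof -
  have "(T ^\<^sub>m k) $$ (i,i) = (T $$ (i,i)) ^ k" if "i < n" for i
  proof (induct k)
    case (Suc k)
    have "(T ^\<^sub>m k * T) $$ (i,i) = (T ^\<^sub>m k) $$ (i,i) * T $$ (i,i)"
      by (rule diag_entry_mult_upper_triangular[OF _ upper_triangular_pow[OF T] T that]) (use T in simp)
    then show ?case unfolding pow_mat.simps(2) Suc power_Suc2 .
  qed (use that T in simp)
  then show ?thesis using T unfolding diag_mat_def by (auto intro!: nth_equalityI)
qed

definition trace_mat :: "'a::comm_monoid_add mat \<Rightarrow> 'a" where
  "trace_mat A = (\<Sum>i<dim_row A. A $$ (i,i))"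

lemma trace_mat_eq_sum_list_diag_mat: "trace_mat A = sum_list (diag_mat A)"
  unfolding trace_mat_def diag_mat_def
  by (simp add: sum_list_sum_nth atLeast0LessThan)

lemma trace_mat_mult_comm:
  fixes X Y :: "'a::comm_semiring_0 mat"
  assumes X: "X \<in> carrier_mat n m" and Y: "Y \<in> carrier_mat m n"
  shows "trace_mat (X * Y) = trace_mat (Y * X)"
proof -
  have "trace_mat (X * Y) = (\<Sum>i<n. \<Sum>l<m. X $$ (i,l) * Y $$ (l,i))"
    unfolding trace_mat_def using X Y
    by (intro sum.cong) (auto simp: scalar_prod_def lessThan_atLeast0)
  also have "\<dots> = (\<Sum>l<m. \<Sum>i<n. Y $$ (l,i) * X $$ (i,l))"
    by (subst sum.swap) (simp add: mult.commute)
  also have "\<dots> = trace_mat (Y * X)"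
    unfolding trace_mat_def using X Y
    by (intro sum.cong) (auto simp: scalar_prod_def lessThan_atLeast0)
  finally show ?thesis .
qed

lemma trace_mat_similar_mat_wit:
  fixes A :: "'a::comm_semiring_1 mat"
  assumes "similar_mat_wit A B P Q"
  shows "trace_mat A = trace_mat B"
proof -
  define n where "n = dim_row A"
  from similar_mat_witD[OF n_def assms] have
    PQ: "Q * P = 1\<^sub>m n" and AB: "A = P * B * Q" and
    carr: "B \<in> carrier_mat n n" "P \<in> carrier_mat n n" "Q \<in> carrier_mat n n" by auto
  have "trace_mat A = trace_mat (Q * (P * B))"
    unfolding AB by (rule trace_mat_mult_comm) (use carr in auto)
  also have "Q * (P * B) = B"
    using carr PQ by (simp add: assoc_mult_mat[symmetric, of Q n n P n B n])
  finally show ?thesis .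
qed

lemma similar_mat_wit_add_smult_one:
  fixes A :: "'a::comm_ring_1 mat"
  assumes A: "A \<in> carrier_mat n n" and sim: "similar_mat_wit A B P Q"
  shows "similar_mat_wit (A + c \<cdot>\<^sub>m 1\<^sub>m n) (B + c \<cdot>\<^sub>m 1\<^sub>m n) P Q"
proof -
  from similar_mat_witD2[OF A sim] have PQ: "P * Q = 1\<^sub>m n" "Q * P = 1\<^sub>m n"
    and AB: "A = P * B * Q" and carr: "B \<in> carrier_mat n n" "P \<in> carrier_mat n n" "Q \<in> carrier_mat n n"
    by auto
  have "A + c \<cdot>\<^sub>m 1\<^sub>m n = P * B * Q + c \<cdot>\<^sub>m (P * Q)" using AB PQ by simp
  also have "\<dots> = (P * B + c \<cdot>\<^sub>m P) * Q"
    using carr by (simp add: add_mult_distrib_mat[of _ n n] mult_smult_assoc_mat)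
  also have "\<dots> = P * (B + c \<cdot>\<^sub>m 1\<^sub>m n) * Q"
    using carr by (simp add: mult_add_distrib_mat mult_smult_distrib[OF _ one_carrier_mat])
  finally have "A + c \<cdot>\<^sub>m 1\<^sub>m n = P * (B + c \<cdot>\<^sub>m 1\<^sub>m n) * Q" .
  with PQ carr show ?thesis by (intro similar_mat_witI) auto
qed

lemma trace_pow_eq_sum_pow_eigenvalues:
  fixes A :: "'a::conjugatable_ordered_field mat"
  assumes A: "A \<in> carrier_mat n n" and cp: "char_poly A = (\<Prod>a\<leftarrow>as. [:-a, 1:])"
  shows "trace_mat (A ^\<^sub>m k) = (\<Sum>a\<leftarrow>as. a ^ k)"
proof -
  obtain T P Q where "schur_decomposition A as = (T,P,Q)" by (cases "schur_decomposition A as")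
  from schur_decomposition[OF A cp this] have sim: "similar_mat_wit A T P Q"
    and T: "upper_triangular T" "diag_mat T = as" by auto
  have "T \<in> carrier_mat n n" using similar_mat_witD2[OF A sim] by auto
  have "trace_mat (A ^\<^sub>m k) = trace_mat (T ^\<^sub>m k)"
    by (rule trace_mat_similar_mat_wit[OF similar_mat_wit_pow[OF sim]])
  also have "\<dots> = (\<Sum>a\<leftarrow>as. a ^ k)"
    unfolding trace_mat_eq_sum_list_diag_mat diag_mat_pow_upper_triangular[OF \<open>T \<in> _\<close> T(1)] T(2) ..
  finally show ?thesis .
qed

lemma char_poly_add_smult_one:
  fixes A :: "'a::conjugatable_ordered_field mat"
  assumes A: "A \<in> carrier_mat n n" and cp: "char_poly A = (\<Prod>a\<leftarrow>as. [:-a, 1:])"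
  shows "char_poly (A + c \<cdot>\<^sub>m 1\<^sub>m n) = (\<Prod>a\<leftarrow>as. [:-(a + c), 1:])"
proof -
  obtain T P Q where "schur_decomposition A as = (T,P,Q)" by (cases "schur_decomposition A as")
  from schur_decomposition[OF A cp this] have sim: "similar_mat_wit A T P Q"
    and T: "upper_triangular T" "diag_mat T = as" by auto
  have Tc: "T \<in> carrier_mat n n" using similar_mat_witD2[OF A sim] by auto
  let ?Tc = "T + c \<cdot>\<^sub>m 1\<^sub>m n"
  have "upper_triangular ?Tc" using T(1) Tc by (auto intro!: upper_triangularI dest: upper_triangularD)
  then have "char_poly ?Tc = (\<Prod>a\<leftarrow>diag_mat ?Tc. [:-a, 1:])"
    by (intro char_poly_upper_triangular[of _ n]) (use Tc in auto)
  also have "diag_mat ?Tc = map (\<lambda>a. a + c) as"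
    using Tc T(2) unfolding diag_mat_def by (auto intro: nth_equalityI)
  finally have "char_poly ?Tc = (\<Prod>a\<leftarrow>as. [:-(a + c), 1:])"
    by (simp only: map_map o_def)
  moreover have "similar_mat (A + c \<cdot>\<^sub>m 1\<^sub>m n) ?Tc"
    unfolding similar_mat_def by (intro exI, rule similar_mat_wit_add_smult_one[OF A sim])
  then have "char_poly (A + c \<cdot>\<^sub>m 1\<^sub>m n) = char_poly ?Tc" by (rule char_poly_similar)
  ultimately show ?thesis by (simp only:)
qed

section \<open>The Rayleigh bound for the all-ones vector\<close>

lemma pow_mat_add:
  fixes B :: "'a::semiring_1 mat"
  assumes B: "B \<in> carrier_mat n n"
  shows "B ^\<^sub>m (k + l) = B ^\<^sub>m k * B ^\<^sub>m l"
proof (induct l)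
  case (Suc l)
  have "B ^\<^sub>m (k + Suc l) = B ^\<^sub>m k * B ^\<^sub>m l * B" using Suc by simp
  also have "\<dots> = B ^\<^sub>m k * (B ^\<^sub>m l * B)" using B by (intro assoc_mult_mat[of _ n n _ n _ n]) auto
  finally show ?case by simp
qed (use B in simp)

lemma pow_mat_mult_comm:
  fixes B :: "'a::semiring_1 mat"
  assumes B: "B \<in> carrier_mat n n"
  shows "B * B ^\<^sub>m k = B ^\<^sub>m k * B"
  using pow_mat_add[OF B, of 1 k] pow_mat_add[OF B, of k 1] B by (simp add: add.commute)

lemma transpose_pow_mat:
  fixes B :: "'a::comm_semiring_1 mat"
  assumes B: "B \<in> carrier_mat n n"
  shows "(B ^\<^sub>m k)\<^sup>T = B\<^sup>T ^\<^sub>m k"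
proof (induct k)
  case (Suc k)
  have "(B ^\<^sub>m Suc k)\<^sup>T = B\<^sup>T * (B ^\<^sub>m k)\<^sup>T" using B by (simp add: transpose_mult[of _ n n])
  also have "\<dots> = B\<^sup>T ^\<^sub>m Suc k" using Suc B by (simp add: pow_mat_mult_comm[of "B\<^sup>T" n])
  finally show ?case .
qed (use B in simp)

lemma sum_mat_eq_double_sum:
  assumes "A \<in> carrier_mat n m"
  shows "sum_mat A = (\<Sum>i<n. \<Sum>j<m. A $$ (i,j))"
  using assms unfolding sum_mat_def by (simp add: sum.cartesian_product lessThan_atLeast0)

lemma square_sum_le_card_mult_sum_squares:
  fixes r :: "nat \<Rightarrow> real"
  shows "(\<Sum>w<n. r w)\<^sup>2 \<le> real n * (\<Sum>w<n. (r w)\<^sup>2)"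
proof -
  have "0 \<le> (\<Sum>u<n. \<Sum>v<n. (r u - r v)\<^sup>2)" by (intro sum_nonneg) auto
  also have "\<dots> = 2 * real n * (\<Sum>w<n. (r w)\<^sup>2) - 2 * (\<Sum>w<n. r w)\<^sup>2"
    by (simp add: power2_eq_square algebra_simps sum_subtractf sum.distrib sum_distrib_left
        sum_distrib_right)
  finally show ?thesis by simp
qed

lemma mult_self_entry_symmetric:
  fixes C :: "'a::comm_semiring_0 mat"
  assumes C: "C \<in> carrier_mat n n" "C\<^sup>T = C" and uv: "u < n" "v < n"
  shows "(C * C) $$ (u,v) = (\<Sum>w<n. C $$ (w,u) * C $$ (w,v))"
proof -
  have "C $$ (u,w) = C $$ (w,u)" if "w < n" for w
    using C uv that transpose_eq_self_iff by blast
  then show ?thesis using C uv by (simp add: scalar_prod_def lessThan_atLeast0)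
qed

lemma sum_mat_square_le_trace_square:
  fixes C :: "real mat"
  assumes C: "C \<in> carrier_mat n n" "C\<^sup>T = C"
  shows "sum_mat (C * C) \<le> real n * trace_mat (C * C)"
proof -
  let ?G = "\<lambda>u v. (C * C) $$ (u,v)"
  have "2 * ?G u v \<le> ?G u u + ?G v v" if "u < n" "v < n" for u v
  proof -
    have "0 \<le> (\<Sum>w<n. (C $$ (w,u) - C $$ (w,v))\<^sup>2)" by (intro sum_nonneg) auto
    also have "\<dots> = ?G u u + ?G v v - 2 * ?G u v"
      using that by (simp add: mult_self_entry_symmetric[OF C] power2_eq_square algebra_simps
          sum_subtractf sum.distrib sum_distrib_left)
    finally show ?thesis by simp
  qed
  then have "2 * (\<Sum>u<n. \<Sum>v<n. ?G u v) \<le> (\<Sum>u<n. \<Sum>v<n. ?G u u + ?G v v)"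
    unfolding sum_distrib_left by (intro sum_mono) auto
  also have "\<dots> = 2 * (real n * (\<Sum>u<n. ?G u u))"
    by (simp add: sum.distrib sum_distrib_left)
  finally show ?thesis
    using C by (simp add: sum_mat_eq_double_sum[of _ n n] trace_mat_def)
qed

lemma square_sum_mat_le_sum_mat_square:
  fixes C :: "real mat"
  assumes C: "C \<in> carrier_mat n n" "C\<^sup>T = C"
  shows "(sum_mat C)\<^sup>2 \<le> real n * sum_mat (C * C)"
proof -
  have "sum_mat (C * C) = (\<Sum>u<n. \<Sum>v<n. (C * C) $$ (u,v))"
    using C by (intro sum_mat_eq_double_sum) auto
  also have "\<dots> = (\<Sum>u<n. \<Sum>v<n. \<Sum>w<n. C $$ (w,u) * C $$ (w,v))"
    by (intro sum.cong refl mult_self_entry_symmetric[OF C]) auto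
  also have "\<dots> = (\<Sum>u<n. \<Sum>w<n. \<Sum>v<n. C $$ (w,u) * C $$ (w,v))"
    by (rule sum.cong[OF refl], rule sum.swap)
  also have "\<dots> = (\<Sum>w<n. \<Sum>u<n. \<Sum>v<n. C $$ (w,u) * C $$ (w,v))"
    by (rule sum.swap)
  also have "\<dots> = (\<Sum>w<n. (\<Sum>u<n. C $$ (w,u))\<^sup>2)"
    by (simp add: power2_eq_square sum_product)
  finally have "sum_mat (C * C) = (\<Sum>w<n. (\<Sum>u<n. C $$ (w,u))\<^sup>2)" .
  moreover have "sum_mat C = (\<Sum>w<n. \<Sum>u<n. C $$ (w,u))"
    using C by (simp add: sum_mat_eq_double_sum)
  ultimately show ?thesis by (simp add: square_sum_le_card_mult_sum_squares)
qed

lemma le_of_frequently_power_le: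
  fixes x y c :: real
  assumes x: "0 \<le> x" and y: "0 \<le> y" and freq: "\<And>m. \<exists>k\<ge>m. x ^ k \<le> c * y ^ k"
  shows "x \<le> y"
proof (rule ccontr)
  assume "\<not> x \<le> y"
  then have yx: "y < x" by simp
  show False
  proof (cases "y = 0")
    case True
    obtain k where "k \<ge> 1" "x ^ k \<le> c * y ^ k" using freq by blast
    then have "x ^ k \<le> 0" using True by (simp add: power_0_left)
    with yx True show False by (metis not_le zero_less_power)
  next
    case False
    with y have y_pos: "0 < y" by simp
    define q where "q = x / y"
    have q: "1 < q" unfolding q_def using yx y_pos by simp
    obtain m :: nat where m: "c / (q - 1) < real m" using reals_Archimedean2 by blast
    obtain k where k: "m \<le> k" "x ^ k \<le> c * y ^ k" using freq by blast
    have "c < real k * (q - 1)"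
      using m k(1) q by (simp add: divide_less_eq) (smt (verit) mult_right_mono of_nat_mono)
    also have "\<dots> < q ^ k" using Bernoulli_inequality[of "q - 1" k] q by simp
    finally have "c * y ^ k < q ^ k * y ^ k" using y_pos by simp
    also have "q ^ k * y ^ k = x ^ k" unfolding q_def using y_pos by (simp add: power_divide)
    finally show False using k(2) by simp
  qed
qed

lemma le_of_iterated_square_bound:
  fixes s :: "nat \<Rightarrow> real"
  assumes d: "0 < d" and y: "0 \<le> y"
    and square: "\<And>m. (s m)\<^sup>2 \<le> d * s (Suc m)"
    and bound: "\<And>m. s (Suc m) \<le> d\<^sup>2 * y ^ 2 ^ Suc m"
  shows "s 0 \<le> d * y"
proof (cases "s 0 \<le> 0")
  case True
  then show ?thesis using d y by (smt (verit) mult_nonneg_nonneg)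
next
  case False
  define x where "x = s 0 / d"
  have x: "0 \<le> x" unfolding x_def using False d by simp
  have lower: "d * x ^ 2 ^ m \<le> s m" for m
  proof (induct m)
    case 0
    then show ?case unfolding x_def using d by simp
  next
    case (Suc m)
    have "d * (d * x ^ 2 ^ Suc m) = (d * x ^ 2 ^ m)\<^sup>2"
      by (simp add: power_mult power2_eq_square algebra_simps)
    also have "\<dots> \<le> (s m)\<^sup>2" using Suc d x by (intro power_mono) auto
    also have "\<dots> \<le> d * s (Suc m)" by (rule square)
    finally show ?case using d by simp
  qed
  have "\<exists>k\<ge>m. x ^ k \<le> d * y ^ k" for m
  proof (intro exI conjI)
    show "m \<le> 2 ^ Suc m" by (rule order.trans[OF less_imp_le[OF less_exp]]) simp
    have "d * x ^ 2 ^ Suc m \<le> d * (d * y ^ 2 ^ Suc m)"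
      using lower[of "Suc m"] bound[of m] by (simp add: power2_eq_square mult.assoc)
    then show "x ^ 2 ^ Suc m \<le> d * y ^ 2 ^ Suc m" using d by simp
  qed
  then have "x \<le> y" by (rule le_of_frequently_power_le[OF x y])
  then show ?thesis unfolding x_def using d by (simp add: field_simps)
qed

text \<open>With \<open>C = B^(2^m)\<close> and \<open>\<one>\<close> the all-ones vector,
  \<open>(\<one>\<^sup>T C \<one>)\<^sup>2 \<le> n \<one>\<^sup>T C\<^sup>2 \<one> \<le> n\<^sup>2 tr (C\<^sup>2) \<le> n\<^sup>3 y^(2^(m+1))\<close>; iterating from
  \<open>m = 0\<close> and taking \<open>2^m\<close>-th roots as \<open>m \<rightarrow> \<infinity>\<close> leaves \<open>\<one>\<^sup>T B \<one> \<le> n y\<close>.\<close>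

lemma sum_mat_le_of_nonneg_spectrum:
  fixes B :: "real mat"
  assumes B: "B \<in> carrier_mat n n" "B\<^sup>T = B"
    and cp: "char_poly B = (\<Prod>r\<leftarrow>rs. [:-r, 1:])" and len: "length rs = n"
    and spectrum: "\<And>r. r \<in> set rs \<Longrightarrow> 0 \<le> r \<and> r \<le> y"
  shows "sum_mat B \<le> real n * y"
proof (cases "n = 0")
  case True
  then show ?thesis using B by (simp add: sum_mat_eq_double_sum)
next
  case False
  then obtain r where "r \<in> set rs" using len by (cases rs) auto
  then have y: "0 \<le> y" using spectrum by force
  define C where "C m = B ^\<^sub>m 2 ^ m" for m
  have C: "C m \<in> carrier_mat n n" "(C m)\<^sup>T = C m" for m
    unfolding C_def using B by (auto simp: transpose_pow_mat)
  have C_Suc: "C (Suc m) = C m * C m" for m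
    unfolding C_def using pow_mat_add[OF B(1), of "2 ^ m" "2 ^ m"] by (simp add: mult_2)
  have "trace_mat (C (Suc m)) \<le> real n * y ^ 2 ^ Suc m" for m
  proof -
    have "trace_mat (C (Suc m)) = (\<Sum>r\<leftarrow>rs. r ^ 2 ^ Suc m)"
      unfolding C_def by (rule trace_pow_eq_sum_pow_eigenvalues[OF B(1) cp])
    also have "\<dots> \<le> (\<Sum>r\<leftarrow>rs. y ^ 2 ^ Suc m)"
      by (rule sum_list_mono) (use spectrum in \<open>auto intro: power_mono\<close>)
    also have "\<dots> = real n * y ^ 2 ^ Suc m" using len by (simp add: sum_list_triv)
    finally show ?thesis .
  qed
  then have "sum_mat (C (Suc m)) \<le> (real n)\<^sup>2 * y ^ 2 ^ Suc m" for m
    using sum_mat_square_le_trace_square[OF C, of m] C_Suc[of m]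
    by (simp add: power2_eq_square mult.assoc) (smt (verit) mult_left_mono of_nat_0_le_iff)
  moreover have "(sum_mat (C m))\<^sup>2 \<le> real n * sum_mat (C (Suc m))" for m
    unfolding C_Suc by (rule square_sum_mat_le_sum_mat_square[OF C])
  ultimately have "sum_mat (C 0) \<le> real n * y"
    by (intro le_of_iterated_square_bound[OF _ y]) (use False in auto)
  then show ?thesis unfolding C_def using B by simp
qed

lemma sum_mat_le_dim_mult_eigenvalue_bound:
  fixes A :: "real mat"
  assumes A: "A \<in> carrier_mat n n" "A\<^sup>T = A"
    and cp: "char_poly A = (\<Prod>r\<leftarrow>rs. [:-r, 1:])" and len: "length rs = n"
    and upper: "\<And>r. r \<in> set rs \<Longrightarrow> r \<le> y"
  shows "sum_mat A \<le> real n * y"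
proof -
  define c where "c = Max (insert 0 (abs ` set rs))"
  have shift: "0 \<le> r + c" if "r \<in> set rs" for r
  proof -
    have "\<bar>r\<bar> \<le> c" unfolding c_def using that by (intro Max_ge) auto
    then show ?thesis by linarith
  qed
  let ?B = "A + c \<cdot>\<^sub>m 1\<^sub>m n"
  have "?B \<in> carrier_mat n n" using A by simp
  moreover have "?B\<^sup>T = ?B"
    using A(1) A(2)[unfolded transpose_eq_self_iff[OF A(1)]]
    by (subst transpose_eq_self_iff[of _ n]) auto
  moreover have "char_poly ?B = (\<Prod>r\<leftarrow>map (\<lambda>r. r + c) rs. [:-r, 1:])"
    using char_poly_add_smult_one[OF A(1) cp] by (simp add: o_def)
  ultimately have "sum_mat ?B \<le> real n * (y + c)"
    by (rule sum_mat_le_of_nonneg_spectrum) (use len shift upper in \<open>auto simp: add_mono\<close>)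
  moreover have "sum_mat ?B = sum_mat A + c * real n"
    using A by (simp add: sum_mat_add[of _ n n] sum_mat_eq_double_sum[of "c \<cdot>\<^sub>m 1\<^sub>m n" n n]
      flip: sum_distrib_left)
  ultimately show ?thesis by (simp add: algebra_simps)
qed

section \<open>Eigenvalues of graphs with loops\<close>

lemma proots_prod_linear_factors: "proots (\<Prod>r\<leftarrow>rs. [:-r, 1:]) = mset (rs :: 'a::idom list)"
proof (induct rs)
  case (Cons r rs)
  have "(\<Prod>r\<leftarrow>rs. [:-r, 1:]) \<noteq> 0" by (auto simp: prod_list_zero_iff)
  then have "proots (\<Prod>r\<leftarrow>r # rs. [:-r, 1:]) = proots [:-r, 1:] + proots (\<Prod>r\<leftarrow>rs. [:-r, 1:])"
    using proots_mult[of "[:-r, 1:]"] by simp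
  then show ?case using Cons by simp
qed simp

lemma eigs_char_poly_split:
  assumes "char_poly A = (\<Prod>r\<leftarrow>rs. [:-r, 1:])"
  shows "eigs A = rev (sort rs)"
  unfolding eigs_def assms proots_prod_linear_factors by (simp add: sorted_list_of_multiset_mset)

lemma eigs_real_symmetric:
  fixes A :: "real mat"
  assumes A: "A \<in> carrier_mat n n" "A\<^sup>T = A"
  shows "char_poly A = (\<Prod>r\<leftarrow>eigs A. [:-r, 1:])" and "length (eigs A) = n"
    and "sorted_wrt (\<ge>) (eigs A)"
proof -
  obtain rs where cp: "char_poly A = (\<Prod>r\<leftarrow>rs. [:-r, 1:])" and len: "length rs = n"
    using char_poly_real_symmetric_splits[OF A] .
  have eigs: "eigs A = rev (sort rs)" by (rule eigs_char_poly_split[OF cp])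
  have "(\<Prod>r\<leftarrow>rs. [:-r, 1:]) = (\<Prod>r\<leftarrow>eigs A. [:-r, 1:])"
    unfolding eigs by (simp only: prod_mset_prod_list[symmetric] mset_map mset_rev mset_sort)
  then show "char_poly A = (\<Prod>r\<leftarrow>eigs A. [:-r, 1:])" using cp by simp
  show "length (eigs A) = n" using eigs len by simp
  show "sorted_wrt (\<ge>) (eigs A)" unfolding eigs sorted_wrt_rev by simp
qed

lemma sum_squares_eigs_le_loop_graph:
  assumes G: "loop_graph_adj n A"
  shows "(\<Sum>x\<leftarrow>eigs A. x\<^sup>2) \<le> real n * eigs A ! 0"
proof -
  from G have A: "A \<in> carrier_mat n n" "A\<^sup>T = A"
    and entries: "\<And>u v. u < n \<Longrightarrow> v < n \<Longrightarrow> A $$ (u,v) \<in> {0, 1} \<and> A $$ (u,v) = A $$ (v,u)"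
    unfolding loop_graph_adj_def by (auto simp: transpose_eq_self_iff)
  note spectrum = eigs_real_symmetric[OF A]
  have "(\<Sum>x\<leftarrow>eigs A. x\<^sup>2) = trace_mat (A ^\<^sub>m 2)"
    by (rule trace_pow_eq_sum_pow_eigenvalues[OF A(1) spectrum(1), symmetric])
  also have "\<dots> = (\<Sum>u<n. \<Sum>v<n. A $$ (u,v) * A $$ (v,u))"
    using A by (simp add: numeral_2_eq_2 trace_mat_def scalar_prod_def lessThan_atLeast0)
  also have "\<dots> = sum_mat A"
  proof -
    have "A $$ (u,v) * A $$ (v,u) = A $$ (u,v)" if "u < n" "v < n" for u v
      using entries[OF that] by (metis insert_iff singletonD mult_zero_left mult_1)
    then show ?thesis unfolding sum_mat_eq_double_sum[OF A(1)] by (intro sum.cong refl) auto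
  qed
  also have "\<dots> \<le> real n * eigs A ! 0"
  proof (rule sum_mat_le_dim_mult_eigenvalue_bound[OF A spectrum(1,2)])
    fix r assume "r \<in> set (eigs A)"
    then obtain k where "k < length (eigs A)" "r = eigs A ! k" by (auto simp: in_set_conv_nth)
    then show "r \<le> eigs A ! 0"
      using spectrum(3) by (cases k) (auto simp: sorted_wrt_iff_nth_less)
  qed
  finally show ?thesis .
qed

lemma add_le_of_square_add_mult_square_le:
  fixes x t k n :: real
  assumes h: "x\<^sup>2 + k * t\<^sup>2 \<le> n * x" and t: "0 \<le> t" and k: "1 \<le> k" and n: "0 \<le> n"
  shows "x + t \<le> n / 2 * (1 + sqrt ((k + 1) / k))"
proof -
  define y where "y = x - n / 2"
  have circle: "y\<^sup>2 + k * t\<^sup>2 \<le> n\<^sup>2 / 4"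
    using h unfolding y_def by (simp add: power2_eq_square algebra_simps)
  have "k * (y + t)\<^sup>2 \<le> (k + 1) * (y\<^sup>2 + k * t\<^sup>2)"
    using zero_le_power2[of "y - k * t"] by (simp add: power2_eq_square algebra_simps)
  then have "(y + t)\<^sup>2 \<le> (k + 1) / k * (y\<^sup>2 + k * t\<^sup>2)"
    using k by (simp add: field_simps)
  also have "\<dots> \<le> (k + 1) / k * (n\<^sup>2 / 4)"
    using circle k by (intro mult_left_mono) auto
  finally have "y + t \<le> sqrt ((k + 1) / k * (n\<^sup>2 / 4))"
    by (metis real_le_rsqrt)
  also have "\<dots> = sqrt ((k + 1) / k) * (n / 2)"
    using n by (simp add: real_sqrt_mult power_divide real_sqrt_divide)
  finally show ?thesis unfolding y_def by (simp add: algebra_simps)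
qed

lemma first_minus_nth_le_of_sum_squares_le:
  fixes xs :: "real list"
  assumes sorted: "sorted_wrt (\<ge>) xs" and len: "length xs = n" and j: "j < n"
    and squares: "(\<Sum>x\<leftarrow>xs. x\<^sup>2) \<le> real n * xs ! 0"
  shows "xs ! 0 - xs ! (n - j - 1) \<le> real n / 2 * (1 + sqrt ((real j + 2) / (real j + 1)))"
proof (cases "j = n - 1")
  case True
  then show ?thesis by simp
next
  case False
  define p where "p = n - j - 1"
  have p: "1 \<le> p" "p < n" unfolding p_def using False j by auto
  define m where "m = max 0 (- xs ! p)"
  have "m\<^sup>2 \<le> (xs ! k)\<^sup>2" if "k \<in> {p..<n}" for k
  proof -
    have "xs ! k \<le> xs ! p" using sorted that len by (cases "k = p") (auto simp: sorted_wrt_iff_nth_less)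
    then show ?thesis unfolding m_def
      using abs_le_square_iff[of "xs ! p" "xs ! k"] by (cases "xs ! p < 0") auto
  qed
  then have "(xs ! 0)\<^sup>2 + real (j + 1) * m\<^sup>2 \<le> (xs ! 0)\<^sup>2 + (\<Sum>k\<in>{p..<n}. (xs ! k)\<^sup>2)"
    using sum_mono[of "{p..<n}" "\<lambda>_. m\<^sup>2"] p j unfolding p_def by simp
  also have "\<dots> = (\<Sum>k\<in>insert 0 {p..<n}. (xs ! k)\<^sup>2)" using p by simp
  also have "\<dots> \<le> (\<Sum>k<n. (xs ! k)\<^sup>2)" using p by (intro sum_mono2) auto
  also have "\<dots> = (\<Sum>x\<leftarrow>xs. x\<^sup>2)"
    unfolding sum_list_sum_nth len lessThan_atLeast0 using len by (intro sum.cong) auto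
  finally have "(xs ! 0)\<^sup>2 + (real j + 1) * m\<^sup>2 \<le> real n * xs ! 0"
    using squares by (simp add: add.commute)
  then have "xs ! 0 + m \<le> real n / 2 * (1 + sqrt ((real j + 1 + 1) / (real j + 1)))"
    by (rule add_le_of_square_add_mult_square_le) (auto simp: m_def)
  moreover have "- xs ! p \<le> m" unfolding m_def by simp
  ultimately show ?thesis unfolding p_def by (simp add: add.assoc)
qed

lemma eig_spread_le_loop_graph:
  assumes n: "1 \<le> n" and j: "j \<le> n - 1" and G: "loop_graph_adj n A"
  shows "eig A 1 - eig A (n - j) \<le> real n / 2 * (1 + sqrt ((real j + 2) / (real j + 1)))"
proof -
  have A: "A \<in> carrier_mat n n" "A\<^sup>T = A"
    using G unfolding loop_graph_adj_def by (auto simp: transpose_eq_self_iff)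
  have "eigs A ! 0 - eigs A ! (n - j - 1) \<le> real n / 2 * (1 + sqrt ((real j + 2) / (real j + 1)))"
    by (rule first_minus_nth_le_of_sum_squares_le[OF eigs_real_symmetric(3,2)[OF A]
          _ sum_squares_eigs_le_loop_graph[OF G]]) (use n j in auto)
  then show ?thesis unfolding eig_def by simp
qed

lemma finite_simple_graphs: "finite {A. simple_graph_adj n A}"
proof -
  let ?I = "{..<n} \<times> {..<n}"
  have "{A. simple_graph_adj n A} \<subseteq> (\<lambda>f. mat n n f) ` (PiE ?I (\<lambda>_. {0, 1::real}))"
  proof
    fix A assume "A \<in> {A. simple_graph_adj n A}"
    then have A: "A \<in> carrier_mat n n" and entries: "\<forall>u<n. \<forall>v<n. A $$ (u,v) \<in> {0, 1}"
      unfolding simple_graph_adj_def loop_graph_adj_def by auto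
    have "A = mat n n (restrict (\<lambda>p. A $$ p) ?I)" using A by (intro eq_matI) auto
    moreover have "restrict (\<lambda>p. A $$ p) ?I \<in> PiE ?I (\<lambda>_. {0, 1})" using entries by auto
    ultimately show "A \<in> (\<lambda>f. mat n n f) ` (PiE ?I (\<lambda>_. {0, 1}))" by blast
  qed
  moreover have "finite (PiE ?I (\<lambda>_. {0, 1::real}))" by (intro finite_PiE) auto
  ultimately show ?thesis by (meson finite_imageI finite_subset)
qed

lemma spread_0_le:
  assumes n: "1 \<le> n" and j: "j \<le> n - 1"
  shows "spread 0 j n \<le> real n / 2 * (1 + sqrt ((real j + 2) / (real j + 1)))"
proof -
  have "{eig A (0 + 1) - eig A (n - j) | A. simple_graph_adj n A}
      = (\<lambda>A. eig A 1 - eig A (n - j)) ` {A. simple_graph_adj n A}" by auto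
  moreover have "0\<^sub>m n n \<in> {A. simple_graph_adj n A}"
    unfolding simple_graph_adj_def loop_graph_adj_def by auto
  ultimately show ?thesis
    unfolding spread_def using eig_spread_le_loop_graph[OF n j] finite_simple_graphs
    by (subst Max_le_iff) (auto simp: simple_graph_adj_def)
qed

theorem theorem1p2:
  shows "(\<forall>(n::nat) (j::nat) A. 1 \<le> n \<longrightarrow> j \<le> n - 1 \<longrightarrow> loop_graph_adj n A \<longrightarrow>
            eig A 1 - eig A (n - j) \<le> real n / 2 * (1 + sqrt ((real j + 2) / (real j + 1))))
       \<and> (\<forall>(j::nat) (L::real). ((\<lambda>n. spread 0 j n / real n) \<longlonglongrightarrow> L) \<longrightarrow>
            L \<le> 1 / 2 * (1 + sqrt ((real j + 2) / (real j + 1))))"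
proof (intro conjI allI impI)
  fix n j :: nat and A
  assume "1 \<le> n" "j \<le> n - 1" "loop_graph_adj n A"
  then show "eig A 1 - eig A (n - j) \<le> real n / 2 * (1 + sqrt ((real j + 2) / (real j + 1)))"
    by (rule eig_spread_le_loop_graph)
next
  fix j :: nat and L :: real
  assume lim: "(\<lambda>n. spread 0 j n / real n) \<longlonglongrightarrow> L"
  show "L \<le> 1 / 2 * (1 + sqrt ((real j + 2) / (real j + 1)))"
  proof (rule LIMSEQ_le_const2[OF lim], intro exI allI impI)
    fix n assume "j + 1 \<le> n"
    then show "spread 0 j n / real n \<le> 1 / 2 * (1 + sqrt ((real j + 2) / (real j + 1)))"
      using spread_0_le[of n j] by (simp add: divide_le_eq mult.commute)
  qed
qed

end
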